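(* Let $n>2$ be an even integer, $a,c\in\mathbb{R}$ and $b\in\{1,-1\}$. Let $m_n(a,b,c)$ be the $(n+1)\times(n+1)$ symmetric matrix with rows/columns indexed $0,\dots,n$, $(0,0)$-entry $-nc$, $(0,j)$- and $(j,0)$-entries $b$ for $j=1,\dots,n$, and lower-right block the circulant $\mathrm{circ}(c,a,0,\dots,0,a)$ (diagonal $c$, entries $a$ at positions $(j,j')$ with $j'\equiv j\pm1\pmod n$, zeros elsewhere). Let \[\lambda_\pm(c)=\tfrac12\Bigl(2a-(n-1)c\pm\sqrt{\bigl(2a+(n+1)c\bigr)^2+4n}\Bigr),\qquad \lambda_{n/2}=c-2a,\] and, for $a\ne0$, $c_{\mathrm{trans}}=\dfrac{8a^2-n}{4(n+1)a}$. Let $\lambda_{\min}(c)$ and $\lambda_{\max}(c)$ be the smallest and largest eigenvalues of $m_n(a,b,c)$. Then: if $a<0$: $\lambda_{\min}(c)=\lambda_-(c)$, and $\lambda_{\max}(c)=\lambda_+(c)$ for $c<c_{\mathrm{trans}}$, $\lambda_{\max}(c)=c-2a$ for $c\ge c_{\mathrm{trans}}$; if $a=0$: $\lambda_{\min}(c)=\lambda_-(c)$ and $\lambda_{\max}(c)=\lambda_+(c)$; if $a>0$: $\lambda_{\min}(c)=c-2a$ for $c\le c_{\mathrm{trans}}$, $\lambda_{\min}(c)=\lambda_-(c)$ for $c>c_{\mathrm{trans}}$, and $\lambda_{\max}(c)=\lambda_+(c)$. *)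

theory Defs
  imports "Jordan_Normal_Form.Char_Poly"
begin

definition m_mat :: "nat \<Rightarrow> real \<Rightarrow> real \<Rightarrow> real \<Rightarrow> real mat" where
  "m_mat n a b c = mat (n+1) (n+1) (\<lambda>(i,j).
     if i = 0 \<and> j = 0 then - real n * c
     else if i = 0 \<or> j = 0 then b
     else if i = j then c
     else if (int j - int i) mod int n = 1 \<or> (int j - int i) mod int n = int n - 1 then a
     else 0)"

definition lam_plus :: "nat \<Rightarrow> real \<Rightarrow> real \<Rightarrow> real" where
  "lam_plus n a c = (2*a - (real n - 1)*c + sqrt ((2*a + (real n + 1)*c)^2 + 4*real n)) / 2"

definition lam_minus :: "nat \<Rightarrow> real \<Rightarrow> real \<Rightarrow> real" where
  "lam_minus n a c = (2*a - (real n - 1)*c - sqrt ((2*a + (real n + 1)*c)^2 + 4*real n)) / 2"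

definition c_trans :: "nat \<Rightarrow> real \<Rightarrow> real" where
  "c_trans n a = (8*a^2 - real n) / (4*(real n + 1)*a)"

definition lambda_min :: "real mat \<Rightarrow> real" where
  "lambda_min M = Min {k. eigenvalue M k}"

definition lambda_max :: "real mat \<Rightarrow> real" where
  "lambda_max M = Max {k. eigenvalue M k}"

end

theory Submission
  imports Defs
begin

(*
  If v is an eigenvector for k and S = v_1 + ... + v_n, then row 0 and the sum of rows 1..n give
  (k + n c) v_0 = b S and (k - c - 2a) S = n b v_0. So when v_0 <> 0, k is a root of the secular
  quadratic (k + n c)(k - c - 2a) - n b^2, i.e. k is lam_minus or lam_plus; when v_0 = 0, the tail
  (v_1, ..., v_n) is an eigenvector of the circulant block and a coordinate of maximal modulus gives
  |k - c| <= 2|a|. Conversely lam_minus, lam_plus and, for even n, c - 2a (alternating eigenvector)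
  are eigenvalues. The quadratic is negative at c + 2a, so lam_minus < c + 2a < lam_plus and the
  only rival of lam_minus, lam_plus for an extreme eigenvalue is c - 2a. There the quadratic equals
  4 (n + 1) a (c_trans - c), and its sign decides.
*)

definition cyc_succ :: "nat \<Rightarrow> nat \<Rightarrow> nat" where
  "cyc_succ n i = (if i = n then 1 else i + 1)"

definition cyc_pred :: "nat \<Rightarrow> nat \<Rightarrow> nat" where
  "cyc_pred n i = (if i = 1 then n else i - 1)"

lemma cyc_succ_in: "i \<in> {1..n} \<Longrightarrow> cyc_succ n i \<in> {1..n}"
  by (auto simp: cyc_succ_def)

lemma cyc_pred_in: "i \<in> {1..n} \<Longrightarrow> cyc_pred n i \<in> {1..n}"
  by (auto simp: cyc_pred_def)

lemma sum_cyc_succ: "(\<Sum>i=1..n. f (cyc_succ n i)) = (\<Sum>i=1..n. f i)"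
  by (rule sum.reindex_bij_witness[where i = "cyc_pred n" and j = "cyc_succ n"])
    (auto simp: cyc_succ_def cyc_pred_def)

lemma sum_cyc_pred: "(\<Sum>i=1..n. f (cyc_pred n i)) = (\<Sum>i=1..n. f i)"
  by (rule sum.reindex_bij_witness[where i = "cyc_succ n" and j = "cyc_pred n"])
    (auto simp: cyc_succ_def cyc_pred_def)

lemma cyclic_adjacent_iff:
  assumes "i \<in> {1..n}" "j \<in> {1..n}" "i \<noteq> j"
  shows "((int j - int i) mod int n = 1 \<or> (int j - int i) mod int n = int n - 1)
    \<longleftrightarrow> j = cyc_succ n i \<or> j = cyc_pred n i"
proof -
  define d where "d = int j - int i"
  have d: "- int n < d" "d < int n" using assms unfolding d_def by auto
  have "d mod int n = (if d \<ge> 0 then d else d + int n)"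
  proof (cases "d \<ge> 0")
    case False
    have "d mod int n = (d + int n) mod int n" by simp
    also have "\<dots> = d + int n" using False d by (intro mod_pos_pos_trivial) auto
    finally show ?thesis using False by simp
  qed (use d in \<open>simp add: mod_pos_pos_trivial\<close>)
  then show ?thesis using assms d unfolding d_def cyc_succ_def cyc_pred_def by auto
qed

lemma atLeast0LessThan_Suc_eq_insert: "{0..<Suc n} = insert 0 {1..n}"
  by auto

lemma m_mat_carrier: "m_mat n a b c \<in> carrier_mat (n+1) (n+1)"
  unfolding m_mat_def by auto

lemma m_mat_mult_vec_0:
  assumes "v \<in> carrier_vec (n+1)"
  shows "(m_mat n a b c *\<^sub>v v) $ 0 = - real n * c * v$0 + b * (\<Sum>j=1..n. v$j)"
proof -
  have "(m_mat n a b c *\<^sub>v v) $ 0 = (\<Sum>j\<in>insert 0 {1..n}. m_mat n a b c $$ (0,j) * v$j)"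
    using assms by (auto simp: m_mat_def scalar_prod_def atLeast0LessThan_Suc_eq_insert)
  also have "\<dots> = - real n * c * v$0 + (\<Sum>j=1..n. b * v$j)"
    by (subst sum.insert) (auto simp: m_mat_def intro!: sum.cong)
  finally show ?thesis by (simp add: sum_distrib_left)
qed

lemma m_mat_mult_vec_Suc:
  assumes "v \<in> carrier_vec (n+1)" "n > 2" "i \<in> {1..n}"
  shows "(m_mat n a b c *\<^sub>v v) $ i = b * v$0 + c * v$i + a * (v$(cyc_succ n i) + v$(cyc_pred n i))"
proof -
  let ?N = "{i, cyc_succ n i, cyc_pred n i}"
  define t where "t j = (if j = i then c * v$j else if j \<in> ?N then a * v$j else 0)" for j
  have "(m_mat n a b c *\<^sub>v v) $ i = (\<Sum>j\<in>insert 0 {1..n}. m_mat n a b c $$ (i,j) * v$j)"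
    using assms by (auto simp: m_mat_def scalar_prod_def atLeast0LessThan_Suc_eq_insert)
  also have "\<dots> = b * v$0 + (\<Sum>j=1..n. t j)"
    using assms cyclic_adjacent_iff[OF assms(3)]
    by (subst sum.insert) (auto simp: m_mat_def t_def intro!: sum.cong)
  also have "(\<Sum>j=1..n. t j) = (\<Sum>j\<in>?N. t j)"
    using assms cyc_succ_in cyc_pred_in by (intro sum.mono_neutral_right) (auto simp: t_def)
  also have "\<dots> = c * v$i + a * v$(cyc_succ n i) + a * v$(cyc_pred n i)"
    using assms by (auto simp: t_def cyc_succ_def cyc_pred_def)
  finally show ?thesis by (simp add: algebra_simps)
qed

definition secular :: "nat \<Rightarrow> real \<Rightarrow> real \<Rightarrow> real \<Rightarrow> real \<Rightarrow> real" where
  "secular n a b c k = (k + real n * c) * (k - c - 2*a) - real n * b^2"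

lemma secular_factor:
  assumes "b^2 = 1"
  shows "secular n a b c k = (k - lam_minus n a c) * (k - lam_plus n a c)"
proof -
  define D where "D = (2*a + (real n + 1)*c)^2 + 4*real n"
  have "(k - lam_minus n a c) * (k - lam_plus n a c)
      = ((2*k - 2*a + (real n - 1)*c)^2 - (sqrt D)^2) / 4"
    unfolding lam_minus_def lam_plus_def D_def[symmetric]
    by (simp add: field_simps power2_eq_square)
  also have "(sqrt D)^2 = D" unfolding D_def by simp
  finally show ?thesis using assms
    unfolding secular_def D_def by (simp add: field_simps power2_eq_square)
qed

lemma lam_minus_le_lam_plus: "lam_minus n a c \<le> lam_plus n a c"
  unfolding lam_minus_def lam_plus_def by simp

lemma secular_nonneg_iff:
  assumes "b^2 = 1"
  shows "0 \<le> secular n a b c k \<longleftrightarrow> k \<le> lam_minus n a c \<or> lam_plus n a c \<le> k"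
  using lam_minus_le_lam_plus[of n a c]
  by (auto simp: secular_factor[OF assms] zero_le_mult_iff)

lemma lam_minus_less_c_plus_2a_less_lam_plus:
  assumes "n > 0"
  shows "lam_minus n a c < c + 2*a \<and> c + 2*a < lam_plus n a c"
proof -
  have "secular n a 1 c (c + 2*a) < 0" using assms by (simp add: secular_def)
  then show ?thesis using secular_nonneg_iff[of 1 n a c "c + 2*a"] by simp
qed

lemma secular_c_minus_2a:
  assumes "a \<noteq> 0"
  shows "secular n a 1 c (c - 2*a) = 4 * (real n + 1) * a * (c_trans n a - c)"
proof -
  have "4 * (real n + 1) * a * c_trans n a = 8*a^2 - real n"
  proof -
    have "4 * (real n + 1) * a \<noteq> 0" using assms by simp
    then show ?thesis unfolding c_trans_def by simp
  qed
  then show ?thesis by (simp add: secular_def algebra_simps power2_eq_square)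
qed

lemma lam_plus_le_iff_c_trans_le:
  assumes "n > 0" "a < 0"
  shows "lam_plus n a c \<le> c - 2*a \<longleftrightarrow> c_trans n a \<le> c"
proof -
  have "lam_minus n a c < c - 2*a"
    using lam_minus_less_c_plus_2a_less_lam_plus[OF assms(1), of a c] assms(2) by simp
  then have "lam_plus n a c \<le> c - 2*a \<longleftrightarrow> 0 \<le> secular n a 1 c (c - 2*a)"
    using secular_nonneg_iff[of 1] by auto
  also have "\<dots> \<longleftrightarrow> c_trans n a \<le> c"
  proof -
    have "4 * (real n + 1) * a < 0" using assms(2) by (simp add: mult_pos_neg)
    then show ?thesis
      using mult_le_cancel_left_neg[of "4 * (real n + 1) * a" 0 "c_trans n a - c"] assms(2)
      by (simp add: secular_c_minus_2a)
  qed
  finally show ?thesis .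
qed

lemma le_lam_minus_iff_le_c_trans:
  assumes "n > 0" "a > 0"
  shows "c - 2*a \<le> lam_minus n a c \<longleftrightarrow> c \<le> c_trans n a"
proof -
  have "c - 2*a < lam_plus n a c"
    using lam_minus_less_c_plus_2a_less_lam_plus[OF assms(1), of a c] assms(2) by simp
  then have "c - 2*a \<le> lam_minus n a c \<longleftrightarrow> 0 \<le> secular n a 1 c (c - 2*a)"
    using secular_nonneg_iff[of 1] by auto
  also have "\<dots> \<longleftrightarrow> c \<le> c_trans n a"
  proof -
    have "4 * (real n + 1) * a > 0" using assms(2) by simp
    then show ?thesis
      using mult_le_cancel_left_pos[of "4 * (real n + 1) * a" 0 "c_trans n a - c"] assms(2)
      by (simp add: secular_c_minus_2a)
  qed
  finally show ?thesis .
qed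

lemma eigenvalue_m_mat_if_secular_root:
  assumes "n > 2" "b \<noteq> 0" "secular n a b c k = 0"
  shows "eigenvalue (m_mat n a b c) k"
proof -
  define v where "v = vec (n+1) (\<lambda>j. if j = 0 then k - c - 2*a else b)"
  have v: "v \<in> carrier_vec (n+1)" unfolding v_def by simp
  have "m_mat n a b c *\<^sub>v v = k \<cdot>\<^sub>v v"
  proof (rule eq_vecI)
    fix i assume "i < dim_vec (k \<cdot>\<^sub>v v)"
    then consider "i = 0" | "i \<in> {1..n}" using v by fastforce
    then show "(m_mat n a b c *\<^sub>v v) $ i = (k \<cdot>\<^sub>v v) $ i"
    proof cases
      case 1
      then show ?thesis using assms(3) m_mat_mult_vec_0[OF v, of a b c]
        by (simp add: v_def secular_def algebra_simps power2_eq_square)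
    next
      case 2
      then show ?thesis
        using m_mat_mult_vec_Suc[OF v assms(1) 2, of a b c] cyc_succ_in[OF 2] cyc_pred_in[OF 2]
        by (auto simp: v_def algebra_simps)
    qed
  qed (simp add: v_def m_mat_def)
  moreover have "v \<noteq> 0\<^sub>v (n+1)"
    using assms by (auto simp: v_def dest!: arg_cong[where f = "\<lambda>w. w $ 1"])
  ultimately show ?thesis
    unfolding eigenvalue_def eigenvector_def using v m_mat_carrier[of n a b c] by auto
qed

lemma sum_alternating_even: "(\<Sum>j=1..2*m. (-1::real)^j) = 0"
  by (induction m) (simp_all add: sum.cl_ivl_Suc)

lemma eigenvalue_m_mat_alternating:
  assumes "n > 2" "even n"
  shows "eigenvalue (m_mat n a b c) (c - 2*a)"
proof -
  define v where "v = vec (n+1) (\<lambda>j. if j = 0 then 0 else (-1::real)^j)"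
  have v: "v \<in> carrier_vec (n+1)" unfolding v_def by simp
  have "m_mat n a b c *\<^sub>v v = (c - 2*a) \<cdot>\<^sub>v v"
  proof (rule eq_vecI)
    fix i assume "i < dim_vec ((c - 2*a) \<cdot>\<^sub>v v)"
    then consider "i = 0" | "i \<in> {1..n}" using v by fastforce
    then show "(m_mat n a b c *\<^sub>v v) $ i = ((c - 2*a) \<cdot>\<^sub>v v) $ i"
    proof cases
      case 1
      obtain m where "n = 2*m" using assms(2) by blast
      then have "(\<Sum>j=1..n. v$j) = 0" using sum_alternating_even[of m] by (simp add: v_def)
      then show ?thesis using 1 m_mat_mult_vec_0[OF v, of a b c] by (simp add: v_def)
    next
      case 2
      have "(-1::real)^(cyc_succ n i) = - ((-1)^i)" "(-1::real)^(cyc_pred n i) = - ((-1)^i)"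
        using 2 assms by (auto simp: cyc_succ_def cyc_pred_def power_diff)
      then show ?thesis
        using 2 m_mat_mult_vec_Suc[OF v assms(1) 2, of a b c] cyc_succ_in[OF 2] cyc_pred_in[OF 2]
        by (auto simp: v_def algebra_simps)
    qed
  qed (simp add: v_def m_mat_def)
  moreover have "v \<noteq> 0\<^sub>v (n+1)"
    using assms by (auto simp: v_def dest!: arg_cong[where f = "\<lambda>w. w $ 1"])
  ultimately show ?thesis
    unfolding eigenvalue_def eigenvector_def using v m_mat_carrier[of n a b c] by auto
qed

lemma neighbour_sum_eigen_abs_le:
  fixes f :: "'i \<Rightarrow> real"
  assumes "finite I" "x \<in> I" "f x \<noteq> 0"
    and "\<And>i. i \<in> I \<Longrightarrow> s i \<in> I \<and> p i \<in> I"
    and "\<And>i. i \<in> I \<Longrightarrow> \<mu> * f i = a * (f (s i) + f (p i))"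
  shows "\<bar>\<mu>\<bar> \<le> 2 * \<bar>a\<bar>"
proof -
  obtain j where j: "j \<in> I" and max: "\<And>i. i \<in> I \<Longrightarrow> \<bar>f i\<bar> \<le> \<bar>f j\<bar>"
  proof -
    let ?F = "(\<lambda>i. \<bar>f i\<bar>) ` I"
    have "Max ?F \<in> ?F" using assms(1,2) by (intro Max_in) auto
    then obtain j where "j \<in> I" "\<bar>f j\<bar> = Max ?F" by auto
    then show thesis using that[of j] assms(1) by (metis Max_ge finite_imageI image_eqI)
  qed
  have "\<bar>\<mu>\<bar> * \<bar>f j\<bar> = \<bar>a\<bar> * \<bar>f (s j) + f (p j)\<bar>"
    using assms(5)[OF j] by (metis abs_mult)
  also have "\<dots> \<le> \<bar>a\<bar> * (2 * \<bar>f j\<bar>)"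
  proof (intro mult_left_mono)
    show "\<bar>f (s j) + f (p j)\<bar> \<le> 2 * \<bar>f j\<bar>"
      using abs_triangle_ineq[of "f (s j)" "f (p j)"] max[of "s j"] max[of "p j"] assms(4)[OF j]
      by linarith
  qed simp
  finally have "\<bar>\<mu>\<bar> * \<bar>f j\<bar> \<le> (2 * \<bar>a\<bar>) * \<bar>f j\<bar>" by simp
  moreover have "\<bar>f j\<bar> > 0" using max[OF assms(2)] assms(3) by linarith
  ultimately show ?thesis by simp
qed

lemma eigenvalue_m_mat_secular_root_or_near_c:
  assumes "n > 2" "eigenvalue (m_mat n a b c) k"
  shows "secular n a b c k = 0 \<or> \<bar>k - c\<bar> \<le> 2 * \<bar>a\<bar>"
proof -
  obtain v where v: "v \<in> carrier_vec (n+1)" and "v \<noteq> 0\<^sub>v (n+1)"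
    and eigen: "m_mat n a b c *\<^sub>v v = k \<cdot>\<^sub>v v"
    using assms(2) m_mat_carrier[of n a b c] unfolding eigenvalue_def eigenvector_def by auto
  then obtain x where x: "x < n+1" "v$x \<noteq> 0" by (metis eq_vecI carrier_vecD index_zero_vec)
  define S where "S = (\<Sum>j=1..n. v$j)"
  have row_0: "(k + real n * c) * v$0 = b * S"
    using m_mat_mult_vec_0[OF v, of a b c] arg_cong[OF eigen, of "\<lambda>w. w $ 0"] v
    by (simp add: S_def algebra_simps)
  have row_Suc: "k * v$i = b * v$0 + c * v$i + a * (v$(cyc_succ n i) + v$(cyc_pred n i))"
    if "i \<in> {1..n}" for i
    using m_mat_mult_vec_Suc[OF v assms(1) that, of a b c] arg_cong[OF eigen, of "\<lambda>w. w $ i"]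
      v that by simp
  have "k * S = (\<Sum>i=1..n. b * v$0 + c * v$i + a * v$(cyc_succ n i) + a * v$(cyc_pred n i))"
    unfolding S_def sum_distrib_left by (intro sum.cong) (auto simp: row_Suc algebra_simps)
  also have "\<dots> = real n * b * v$0 + c * S + 2 * a * S"
    using sum_cyc_succ[of "\<lambda>i. v$i" n] sum_cyc_pred[of "\<lambda>i. v$i" n]
    by (simp only: sum.distrib sum_distrib_left[symmetric] S_def) (simp add: algebra_simps)
  finally have row_sum: "(k - c - 2*a) * S = real n * b * v$0" by (simp add: algebra_simps)
  show ?thesis
  proof (cases "v$0 = 0")
    case False
    have "(k + real n * c) * (k - c - 2*a) * v$0 = b * ((k - c - 2*a) * S)"
      using row_0 by (metis mult.commute mult.left_commute)
    also have "\<dots> = real n * b^2 * v$0" unfolding row_sum by (simp add: power2_eq_square)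
    finally have "secular n a b c k * v$0 = 0" by (simp add: secular_def algebra_simps)
    then show ?thesis using False by simp
  next
    case True
    have "\<bar>k - c\<bar> \<le> 2 * \<bar>a\<bar>"
    proof (rule neighbour_sum_eigen_abs_le[where I = "{1..n}" and f = "\<lambda>i. v$i"])
      show "x \<in> {1..n}" using x True by (cases x) auto
      show "(k - c) * v$i = a * (v$(cyc_succ n i) + v$(cyc_pred n i))" if "i \<in> {1..n}" for i
        using row_Suc[OF that] True by (simp add: algebra_simps)
    qed (use x cyc_succ_in cyc_pred_in in auto)
    then show ?thesis ..
  qed
qed

lemma eigenvalue_m_mat_lam_or_near_c:
  assumes "n > 2" "b^2 = 1" "eigenvalue (m_mat n a b c) k"
  shows "k = lam_minus n a c \<or> k = lam_plus n a c \<or> \<bar>k - c\<bar> \<le> 2 * \<bar>a\<bar>"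
  using eigenvalue_m_mat_secular_root_or_near_c[OF assms(1,3)] secular_factor[OF assms(2)] by auto

lemma eigenvalue_m_mat_lam:
  assumes "n > 2" "b^2 = 1"
  shows "eigenvalue (m_mat n a b c) (lam_minus n a c)" "eigenvalue (m_mat n a b c) (lam_plus n a c)"
proof -
  have "b \<noteq> 0" using assms(2) by auto
  note eigen = eigenvalue_m_mat_if_secular_root[OF assms(1) this]
  show "eigenvalue (m_mat n a b c) (lam_minus n a c)" "eigenvalue (m_mat n a b c) (lam_plus n a c)"
    by (simp_all add: eigen secular_factor[OF assms(2)])
qed

lemma finite_eigenvalues:
  assumes "(A :: 'a :: field mat) \<in> carrier_mat n n"
  shows "finite {k. eigenvalue A k}"
proof -
  have "char_poly A \<noteq> 0" using degree_monic_char_poly[OF assms] by auto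
  then show ?thesis
    using poly_roots_finite[of "char_poly A"] eigenvalue_root_char_poly[OF assms] by simp
qed

lemma lambda_min_eqI:
  assumes "A \<in> carrier_mat n n" "eigenvalue A x" "\<And>k. eigenvalue A k \<Longrightarrow> x \<le> k"
  shows "lambda_min A = x"
  unfolding lambda_min_def using assms finite_eigenvalues[OF assms(1)] by (intro Min_eqI) auto

lemma lambda_max_eqI:
  assumes "A \<in> carrier_mat n n" "eigenvalue A x" "\<And>k. eigenvalue A k \<Longrightarrow> k \<le> x"
  shows "lambda_max A = x"
  unfolding lambda_max_def using assms finite_eigenvalues[OF assms(1)] by (intro Max_eqI) auto

lemma lambda_min_m_mat_nonpos:
  assumes "n > 2" "b^2 = 1" "a \<le> 0"
  shows "lambda_min (m_mat n a b c) = lam_minus n a c"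
proof (rule lambda_min_eqI[OF m_mat_carrier])
  show "eigenvalue (m_mat n a b c) (lam_minus n a c)"
    by (rule eigenvalue_m_mat_lam(1)[OF assms(1,2)])
  show "lam_minus n a c \<le> k" if "eigenvalue (m_mat n a b c) k" for k
    using eigenvalue_m_mat_lam_or_near_c[OF assms(1,2) that] lam_minus_le_lam_plus[of n a c]
      lam_minus_less_c_plus_2a_less_lam_plus[of n a c] assms by auto
qed

lemma lambda_max_m_mat_nonneg:
  assumes "n > 2" "b^2 = 1" "a \<ge> 0"
  shows "lambda_max (m_mat n a b c) = lam_plus n a c"
proof (rule lambda_max_eqI[OF m_mat_carrier])
  show "eigenvalue (m_mat n a b c) (lam_plus n a c)"
    by (rule eigenvalue_m_mat_lam(2)[OF assms(1,2)])
  show "k \<le> lam_plus n a c" if "eigenvalue (m_mat n a b c) k" for k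
    using eigenvalue_m_mat_lam_or_near_c[OF assms(1,2) that] lam_minus_le_lam_plus[of n a c]
      lam_minus_less_c_plus_2a_less_lam_plus[of n a c] assms by auto
qed

lemma lambda_max_m_mat_nonpos:
  assumes "n > 2" "even n" "b^2 = 1" "a \<le> 0"
  shows "lambda_max (m_mat n a b c) = max (lam_plus n a c) (c - 2*a)"
proof (rule lambda_max_eqI[OF m_mat_carrier])
  show "eigenvalue (m_mat n a b c) (max (lam_plus n a c) (c - 2*a))"
    using eigenvalue_m_mat_lam[OF assms(1,3)] eigenvalue_m_mat_alternating[OF assms(1,2)]
    by (simp add: max_def)
  show "k \<le> max (lam_plus n a c) (c - 2*a)" if "eigenvalue (m_mat n a b c) k" for k
    using eigenvalue_m_mat_lam_or_near_c[OF assms(1,3) that] lam_minus_le_lam_plus[of n a c] assms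
    by auto
qed

lemma lambda_min_m_mat_nonneg:
  assumes "n > 2" "even n" "b^2 = 1" "a \<ge> 0"
  shows "lambda_min (m_mat n a b c) = min (lam_minus n a c) (c - 2*a)"
proof (rule lambda_min_eqI[OF m_mat_carrier])
  show "eigenvalue (m_mat n a b c) (min (lam_minus n a c) (c - 2*a))"
    using eigenvalue_m_mat_lam[OF assms(1,3)] eigenvalue_m_mat_alternating[OF assms(1,2)]
    by (simp add: min_def)
  show "min (lam_minus n a c) (c - 2*a) \<le> k" if "eigenvalue (m_mat n a b c) k" for k
    using eigenvalue_m_mat_lam_or_near_c[OF assms(1,3) that] lam_minus_le_lam_plus[of n a c] assms
    by auto
qed

theorem theorem6:
  fixes n :: nat and a b c :: real
  assumes "n > 2" and "even n" and "b = 1 \<or> b = -1"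
  shows "(a < 0 \<longrightarrow>
            lambda_min (m_mat n a b c) = lam_minus n a c \<and>
            (c < c_trans n a \<longrightarrow> lambda_max (m_mat n a b c) = lam_plus n a c) \<and>
            (c \<ge> c_trans n a \<longrightarrow> lambda_max (m_mat n a b c) = c - 2*a))
       \<and> (a = 0 \<longrightarrow>
            lambda_min (m_mat n a b c) = lam_minus n a c \<and>
            lambda_max (m_mat n a b c) = lam_plus n a c)
       \<and> (a > 0 \<longrightarrow>
            (c \<le> c_trans n a \<longrightarrow> lambda_min (m_mat n a b c) = c - 2*a) \<and>
            (c > c_trans n a \<longrightarrow> lambda_min (m_mat n a b c) = lam_minus n a c) \<and>
            lambda_max (m_mat n a b c) = lam_plus n a c)"
proof -
  have b: "b^2 = 1" using assms(3) by auto
  have n: "n > 0" using assms(1) by simp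
  have "lambda_max (m_mat n a b c) = (if c_trans n a \<le> c then c - 2*a else lam_plus n a c)"
    if "a < 0"
    using lambda_max_m_mat_nonpos[OF assms(1,2) b less_imp_le[OF that], of c]
      lam_plus_le_iff_c_trans_le[OF n that, of c]
    by (simp add: max_def)
  moreover have "lambda_min (m_mat n a b c) = (if c \<le> c_trans n a then c - 2*a else lam_minus n a c)"
    if "a > 0"
    using lambda_min_m_mat_nonneg[OF assms(1,2) b less_imp_le[OF that], of c]
      le_lam_minus_iff_le_c_trans[OF n that, of c]
    by (auto simp: min_def)
  ultimately show ?thesis
    using lambda_min_m_mat_nonpos[OF assms(1) b, of a c]
      lambda_max_m_mat_nonneg[OF assms(1) b, of a c] by auto
qed

end
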